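(* Let $\mathcal{Q}$ be a parabolic subset of $\mathcal{R}$, $C$ a Weyl chamber with $\mathcal{R}^+(C)\subseteq\mathcal{Q}$, and $\mathrm{s}$ an involution of $\mathcal{R}$. Let $\Phi_C=\mathcal{B}(C)\cap\mathcal{Q}^n$, $\Phi_C^\vee=\mathcal{B}(C)\setminus\Phi_C$, $\Phi_C^{\mathrm{s},+}=\{\alpha\in\Phi_C\mid\mathrm{s}(\alpha)\in\mathcal{R}^+(C)\}$, $\Phi_C^{\mathrm{s},-}=\{\alpha\in\Phi_C\mid\mathrm{s}(\alpha)\in\mathcal{R}^-(C)\}$, and $$\Psi_C=\Big\{\alpha\in\Phi_C^{\mathrm{s},+}\ \Big|\ \mathrm{s}(\alpha)\in\mathcal{Q}^n,\ \alpha\notin\bigcup_{\beta\in\Phi_C^\vee\cup\Phi_C^{\mathrm{s},-}}\mathrm{supp}_C(\mathrm{s}(\beta))\Big\}.$$ Then $\mathcal{Q}_{\Psi_C}$ is the smallest parabolic (equivalently, closed) subset of $\mathcal{R}$ containing $\mathcal{Q}\cup\mathrm{s}(\mathcal{Q})$; in particular $(\mathcal{Q}_{\Psi_C},\mathrm{s})$ is totally real. Consequently $(\mathcal{Q},\mathrm{s})$ is fundamental if and only if $\Psi_C=\emptyset$.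
   Context: $\mathcal{R}$ is a reduced root system in a Euclidean space $V$. Closed subset: $\alpha,\beta\in\mathcal{Q}$, $\alpha+\beta\in\mathcal{R}\Rightarrow\alpha+\beta\in\mathcal{Q}$; parabolic: closed with $\mathcal{Q}\cup(-\mathcal{Q})=\mathcal{R}$. $\mathcal{Q}^n=\{\alpha\in\mathcal{Q}\mid-\alpha\notin\mathcal{Q}\}$. For a Weyl chamber $C$: $\mathcal{R}^\pm(C)$ positive/negative roots, $\mathcal{B}(C)$ simple roots, $\mathrm{supp}_C(\alpha)$ the set of simple roots with nonzero coefficient in $\alpha$. For $\Phi\subseteq\mathcal{B}(C)$, $\mathcal{Q}_\Phi=\mathcal{R}^+(C)\cup\{\alpha\in\mathcal{R}^-(C)\mid\mathrm{supp}_C(\alpha)\cap\Phi=\emptyset\}$ (so $\mathcal{Q}_\emptyset=\mathcal{R}$). An involution of $\mathcal{R}$ is a linear isometric involution $\mathrm{s}$ of $V$ with $\mathrm{s}(\mathcal{R})=\mathcal{R}$. A pair $(\mathcal{Q}',\mathrm{s})$ is totally real if $\mathrm{s}(\mathcal{Q}')=\mathcal{Q}'$; $(\mathcal{Q},\mathrm{s})$ is fundamental if the smallest closed subset of $\mathcal{R}$ containing $\mathcal{Q}\cup\mathrm{s}(\mathcal{Q})$ is $\mathcal{R}$. *)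

theory Defs
  imports "HOL-Analysis.Analysis"
begin

definition root_reflection :: "'a::euclidean_space \<Rightarrow> 'a \<Rightarrow> 'a" where
  "root_reflection \<alpha> x = x - ((2 * (\<alpha> \<bullet> x)) / (\<alpha> \<bullet> \<alpha>)) *\<^sub>R \<alpha>"

definition reduced_root_system :: "'a::euclidean_space set \<Rightarrow> bool" where
  "reduced_root_system R \<longleftrightarrow>
     finite R \<and> 0 \<notin> R \<and> span R = UNIV \<and>
     (\<forall>\<alpha>\<in>R. root_reflection \<alpha> ` R = R) \<and>
     (\<forall>\<alpha>\<in>R. \<forall>\<beta>\<in>R. (2 * (\<alpha> \<bullet> \<beta>)) / (\<alpha> \<bullet> \<alpha>) \<in> \<int>) \<and>
     (\<forall>\<alpha>\<in>R. \<forall>c::real. c *\<^sub>R \<alpha> \<in> R \<longrightarrow> c = 1 \<or> c = -1)"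

definition root_hyperplanes :: "'a::euclidean_space set \<Rightarrow> 'a set" where
  "root_hyperplanes R = (\<Union>\<alpha>\<in>R. {x. \<alpha> \<bullet> x = 0})"

definition weyl_chamber :: "'a::euclidean_space set \<Rightarrow> 'a set \<Rightarrow> bool" where
  "weyl_chamber R C \<longleftrightarrow>
     (\<exists>x. x \<notin> root_hyperplanes R \<and> C = connected_component_set (- root_hyperplanes R) x)"

definition pos_roots :: "'a::euclidean_space set \<Rightarrow> 'a set \<Rightarrow> 'a set" where
  "pos_roots R C = {\<alpha>\<in>R. \<forall>x\<in>C. 0 < \<alpha> \<bullet> x}"

definition neg_roots :: "'a::euclidean_space set \<Rightarrow> 'a set \<Rightarrow> 'a set" where
  "neg_roots R C = {\<alpha>\<in>R. \<forall>x\<in>C. \<alpha> \<bullet> x < 0}"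

definition simple_roots :: "'a::euclidean_space set \<Rightarrow> 'a set \<Rightarrow> 'a set" where
  "simple_roots R C = {\<alpha>\<in>pos_roots R C.
     \<not> (\<exists>\<beta>\<in>pos_roots R C. \<exists>\<gamma>\<in>pos_roots R C. \<alpha> = \<beta> + \<gamma>)}"

text \<open>Support: simple roots with nonzero coefficient in the expansion of \<alpha> in the basis B(C)
  (the expansion is unique since B(C) is linearly independent).\<close>

definition supp :: "'a::euclidean_space set \<Rightarrow> 'a set \<Rightarrow> 'a \<Rightarrow> 'a set" where
  "supp R C \<alpha> = {\<beta>\<in>simple_roots R C. \<exists>c. \<alpha> = (\<Sum>\<gamma>\<in>simple_roots R C. c \<gamma> *\<^sub>R \<gamma>) \<and> c \<beta> \<noteq> 0}"

definition closed_subset :: "'a::euclidean_space set \<Rightarrow> 'a set \<Rightarrow> bool" where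
  "closed_subset R Q \<longleftrightarrow> Q \<subseteq> R \<and> (\<forall>\<alpha>\<in>Q. \<forall>\<beta>\<in>Q. \<alpha> + \<beta> \<in> R \<longrightarrow> \<alpha> + \<beta> \<in> Q)"

definition parabolic :: "'a::euclidean_space set \<Rightarrow> 'a set \<Rightarrow> bool" where
  "parabolic R Q \<longleftrightarrow> closed_subset R Q \<and> Q \<union> uminus ` Q = R"

definition nilpart :: "'a::euclidean_space set \<Rightarrow> 'a set" where
  "nilpart Q = {\<alpha>\<in>Q. - \<alpha> \<notin> Q}"

definition Q_of :: "'a::euclidean_space set \<Rightarrow> 'a set \<Rightarrow> 'a set \<Rightarrow> 'a set" where
  "Q_of R C \<Phi> = pos_roots R C \<union> {\<alpha>\<in>neg_roots R C. supp R C \<alpha> \<inter> \<Phi> = {}}"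

definition root_involution :: "'a::euclidean_space set \<Rightarrow> ('a \<Rightarrow> 'a) \<Rightarrow> bool" where
  "root_involution R s \<longleftrightarrow> linear s \<and> (\<forall>x. norm (s x) = norm x) \<and> (\<forall>x. s (s x) = x) \<and> s ` R = R"

definition closed_hull :: "'a::euclidean_space set \<Rightarrow> 'a set \<Rightarrow> 'a set" where
  "closed_hull R A = \<Inter>{Q'. closed_subset R Q' \<and> A \<subseteq> Q'}"

definition totally_real :: "'a::euclidean_space set \<Rightarrow> ('a \<Rightarrow> 'a) \<Rightarrow> bool" where
  "totally_real Q s \<longleftrightarrow> s ` Q = Q"

definition fundamental :: "'a::euclidean_space set \<Rightarrow> 'a set \<Rightarrow> ('a \<Rightarrow> 'a) \<Rightarrow> bool" where
  "fundamental R Q s \<longleftrightarrow> closed_hull R (Q \<union> s ` Q) = R"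

end

theory Submission
  imports Defs
begin

(* Fix a point x0 of the chamber C. The simple roots are pairwise non-acute and lie on one side of
   the hyperplane orthogonal to x0, hence linearly independent, so every root has unique coordinates
   in B(C), nonnegative for positive roots; Q_Psi is then the set of roots whose Psi-coordinates are
   nonnegative, which is closed. A closed set containing R^+(C) contains -delta, for a positive root
   delta, iff it contains -gamma for every gamma in supp(delta): split delta into two positive roots
   of smaller height and use closedness in both directions.
   For alpha in Q, the Psi-coordinates of s(alpha) = sum_gamma c_gamma(alpha) s(gamma) are
   nonnegative term by term, by the choice of Psi, so Q and s(Q) lie in Q_Psi. Conversely, for each
   simple root gamma outside Psi, the definition of Psi exhibits -gamma in every closed set containing
   Q and s(Q), directly or through the support criterion; hence Q_Psi is the closed hull of
   Q and s(Q). As the hull of an s-stable set it is s-stable, and it is all of R iff Psi is empty. *)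

lemma root_system_uminus:
  assumes "reduced_root_system R" and "\<alpha> \<in> R"
  shows "- \<alpha> \<in> R"
proof -
  have "\<alpha> \<noteq> 0" and "root_reflection \<alpha> \<alpha> \<in> R"
    using assms unfolding reduced_root_system_def by auto
  moreover have "\<alpha> \<noteq> 0 \<Longrightarrow> root_reflection \<alpha> \<alpha> = - \<alpha>"
    by (simp add: root_reflection_def scaleR_2 algebra_simps)
  ultimately show ?thesis by simp
qed

lemma root_system_abs_inner_less:
  assumes R: "reduced_root_system R" and \<alpha>: "\<alpha> \<in> R" and \<beta>: "\<beta> \<in> R"
    and "\<beta> \<noteq> \<alpha>" and "\<beta> \<noteq> - \<alpha>"
  shows "\<bar>\<alpha> \<bullet> \<beta>\<bar> < norm \<alpha> * norm \<beta>"
proof -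
  have "\<bar>\<alpha> \<bullet> \<beta>\<bar> \<noteq> norm \<alpha> * norm \<beta>"
  proof
    assume "\<bar>\<alpha> \<bullet> \<beta>\<bar> = norm \<alpha> * norm \<beta>"
    then obtain t where t: "norm \<alpha> *\<^sub>R \<beta> = t *\<^sub>R \<alpha>"
      unfolding norm_cauchy_schwarz_abs_eq by blast
    have "\<alpha> \<noteq> 0" using R \<alpha> unfolding reduced_root_system_def by auto
    then have "\<beta> = inverse (norm \<alpha>) *\<^sub>R (norm \<alpha> *\<^sub>R \<beta>)"
      by simp
    also have "\<dots> = (t / norm \<alpha>) *\<^sub>R \<alpha>"
      unfolding t by (simp add: divide_inverse mult.commute)
    finally have "\<beta> = (t / norm \<alpha>) *\<^sub>R \<alpha>" .
    then have "t / norm \<alpha> = 1 \<or> t / norm \<alpha> = -1"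
      using R \<alpha> \<beta> unfolding reduced_root_system_def by metis
    with \<open>\<beta> = (t / norm \<alpha>) *\<^sub>R \<alpha>\<close> assms(4,5) show False by auto
  qed
  with Cauchy_Schwarz_ineq2[of \<alpha> \<beta>] show ?thesis by linarith
qed

lemma root_system_cartan_eq_one:
  assumes R: "reduced_root_system R" and \<alpha>: "\<alpha> \<in> R" and \<beta>: "\<beta> \<in> R"
    and pos: "0 < \<alpha> \<bullet> \<beta>" and "\<alpha> \<noteq> \<beta>"
  shows "2 * (\<alpha> \<bullet> \<beta>) / (\<alpha> \<bullet> \<alpha>) = 1 \<or> 2 * (\<beta> \<bullet> \<alpha>) / (\<beta> \<bullet> \<beta>) = 1"
proof -
  have "0 < \<alpha> \<bullet> \<alpha>" "0 < \<beta> \<bullet> \<beta>"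
    using R \<alpha> \<beta> unfolding reduced_root_system_def by auto
  have "\<beta> \<noteq> - \<alpha>"
  proof
    assume "\<beta> = - \<alpha>"
    then have "\<alpha> \<bullet> \<beta> = - (\<alpha> \<bullet> \<alpha>)" by simp
    with pos \<open>0 < \<alpha> \<bullet> \<alpha>\<close> show False by linarith
  qed
  then have "\<bar>\<alpha> \<bullet> \<beta>\<bar> < norm \<alpha> * norm \<beta>"
    using root_system_abs_inner_less assms by metis
  then have "\<bar>\<alpha> \<bullet> \<beta>\<bar>\<^sup>2 < (norm \<alpha> * norm \<beta>)\<^sup>2"
    by (intro power_strict_mono) auto
  then have "(\<alpha> \<bullet> \<beta>)\<^sup>2 < (\<alpha> \<bullet> \<alpha>) * (\<beta> \<bullet> \<beta>)"
    by (simp add: power_mult_distrib power2_norm_eq_inner)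
  obtain k l :: int where k: "2 * (\<alpha> \<bullet> \<beta>) / (\<alpha> \<bullet> \<alpha>) = k" and l: "2 * (\<beta> \<bullet> \<alpha>) / (\<beta> \<bullet> \<beta>) = l"
    using R \<alpha> \<beta> unfolding reduced_root_system_def by (metis Ints_cases)
  have "0 < real_of_int k" "0 < real_of_int l"
    unfolding k[symmetric] l[symmetric]
    using pos \<open>0 < \<alpha> \<bullet> \<alpha>\<close> \<open>0 < \<beta> \<bullet> \<beta>\<close> by (auto simp: inner_commute)
  then have "0 < k" "0 < l" by simp_all
  have "real_of_int (k * l) = 4 * (\<alpha> \<bullet> \<beta>)\<^sup>2 / ((\<alpha> \<bullet> \<alpha>) * (\<beta> \<bullet> \<beta>))"
    unfolding of_int_mult k[symmetric] l[symmetric] by (simp add: inner_commute power2_eq_square)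
  also have "\<dots> < 4"
    using \<open>(\<alpha> \<bullet> \<beta>)\<^sup>2 < _\<close> \<open>0 < \<alpha> \<bullet> \<alpha>\<close> \<open>0 < \<beta> \<bullet> \<beta>\<close> by (simp add: divide_less_eq)
  finally have "k * l < 4" by linarith
  moreover have "2 * 2 \<le> k * l" if "k \<noteq> 1" "l \<noteq> 1"
    using that \<open>0 < k\<close> \<open>0 < l\<close> by (intro mult_mono) auto
  ultimately have "k = 1 \<or> l = 1" by linarith
  then show ?thesis using k l by auto
qed

lemma root_system_diff:
  assumes R: "reduced_root_system R" and \<alpha>: "\<alpha> \<in> R" and \<beta>: "\<beta> \<in> R"
    and pos: "0 < \<alpha> \<bullet> \<beta>" and "\<alpha> \<noteq> \<beta>"
  shows "\<alpha> - \<beta> \<in> R"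
  using root_system_cartan_eq_one[OF assms]
proof
  assume "2 * (\<alpha> \<bullet> \<beta>) / (\<alpha> \<bullet> \<alpha>) = 1"
  then have "root_reflection \<alpha> \<beta> = - (\<alpha> - \<beta>)"
    using pos by (simp add: root_reflection_def)
  then show ?thesis
    using R \<alpha> \<beta> root_system_uminus unfolding reduced_root_system_def by (metis imageI minus_minus)
next
  assume "2 * (\<beta> \<bullet> \<alpha>) / (\<beta> \<bullet> \<beta>) = 1"
  then have "root_reflection \<beta> \<alpha> = \<alpha> - \<beta>"
    using pos by (simp add: root_reflection_def inner_commute[of \<beta> \<alpha>])
  then show ?thesis
    using R \<alpha> \<beta> unfolding reduced_root_system_def by (metis imageI)
qed

lemma halfspace_positive_combination_eq_0:
  fixes T :: "'a::real_inner set"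
  assumes "finite T" "\<And>v. v \<in> T \<Longrightarrow> 0 < v \<bullet> x" "\<And>v. v \<in> T \<Longrightarrow> 0 < c v"
    and "(\<Sum>v\<in>T. c v *\<^sub>R v) = 0"
  shows "T = {}"
proof (rule ccontr)
  assume "T \<noteq> {}"
  then have "0 < (\<Sum>v\<in>T. c v * (v \<bullet> x))"
    using assms by (intro sum_pos) auto
  also have "\<dots> = (\<Sum>v\<in>T. c v *\<^sub>R v) \<bullet> x"
    by (simp add: inner_sum_left)
  finally show False using assms(4) by simp
qed

lemma independent_if_pairwise_nonacute:
  fixes S :: "'a::real_inner set"
  assumes "finite S"
    and nonacute: "\<And>u v. u \<in> S \<Longrightarrow> v \<in> S \<Longrightarrow> u \<noteq> v \<Longrightarrow> u \<bullet> v \<le> 0"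
    and halfspace: "\<And>v. v \<in> S \<Longrightarrow> 0 < v \<bullet> x"
  shows "independent S"
proof -
  show ?thesis
    unfolding dependent_finite[OF \<open>finite S\<close>]
  proof clarify
    fix u v assume "v \<in> S" "u v \<noteq> 0" and rel: "(\<Sum>v\<in>S. u v *\<^sub>R v) = 0"
    define Sp where "Sp = {v\<in>S. 0 < u v}"
    define Sn where "Sn = {v\<in>S. u v < 0}"
    define p where "p = (\<Sum>v\<in>Sp. u v *\<^sub>R v)"
    have "(\<Sum>v\<in>S. u v *\<^sub>R v) = (\<Sum>v\<in>Sp \<union> Sn. u v *\<^sub>R v)"
      using \<open>finite S\<close> by (intro sum.mono_neutral_right) (auto simp: Sp_def Sn_def)
    also have "\<dots> = p - (\<Sum>w\<in>Sn. (- u w) *\<^sub>R w)"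
      using \<open>finite S\<close> by (subst sum.union_disjoint) (auto simp: p_def Sp_def Sn_def sum_negf)
    finally have p_Sn: "p = (\<Sum>w\<in>Sn. (- u w) *\<^sub>R w)"
      using rel by simp
    have "p \<bullet> w \<le> 0" if "w \<in> Sn" for w
    proof -
      have "p \<bullet> w = (\<Sum>v\<in>Sp. u v * (v \<bullet> w))"
        by (simp add: p_def inner_sum_left)
      also have "\<dots> \<le> 0"
        using that by (intro sum_nonpos mult_nonneg_nonpos nonacute) (auto simp: Sp_def Sn_def)
      finally show ?thesis .
    qed
    then have "p \<bullet> p \<le> 0"
      by (subst (2) p_Sn, unfold inner_sum_right inner_scaleR_right)
         (intro sum_nonpos mult_nonneg_nonpos, auto simp: Sn_def)
    then have "p = 0"
      using inner_ge_zero[of p] by simp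
    then have "Sp = {}"
      using \<open>finite S\<close> halfspace
      by (intro halfspace_positive_combination_eq_0[of Sp x u]) (auto simp: p_def Sp_def)
    have "Sn = {}"
      using \<open>p = 0\<close> \<open>finite S\<close> halfspace
      by (intro halfspace_positive_combination_eq_0[of Sn x "\<lambda>w. - u w"]) (auto simp: p_Sn Sn_def)
    moreover have "0 < u v \<or> u v < 0"
      using \<open>u v \<noteq> 0\<close> by linarith
    ultimately show False
      using \<open>Sp = {}\<close> \<open>v \<in> S\<close> unfolding Sp_def Sn_def by blast
  qed
qed

lemma closed_hull_eq_hull: "closed_hull R A = closed_subset R hull A"
  by (simp add: closed_hull_def hull_def)

lemma closed_subset_closed_hull:
  assumes "A \<subseteq> R"
  shows "closed_subset R (closed_hull R A)"
  using assms unfolding closed_hull_def closed_subset_def by blast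

lemma closed_subset_image_involution:
  assumes "root_involution R s" "closed_subset R A"
  shows "closed_subset R (s ` A)"
  unfolding closed_subset_def
proof (intro conjI ballI impI)
  have "linear s" "\<And>x. s (s x) = x" "s ` R = R"
    using assms(1) unfolding root_involution_def by auto
  then show "s ` A \<subseteq> R"
    using assms(2) unfolding closed_subset_def by blast
  fix a b assume "a \<in> s ` A" "b \<in> s ` A" "a + b \<in> R"
  then obtain x y where "x \<in> A" "y \<in> A" and ab: "a = s x" "b = s y" by blast
  have "s (a + b) = x + y"
    by (simp add: ab linear_add[OF \<open>linear s\<close>] \<open>\<And>x. s (s x) = x\<close>)
  moreover have "s (a + b) \<in> R" using \<open>a + b \<in> R\<close> \<open>s ` R = R\<close> by blast
  ultimately have "x + y \<in> A"
    using assms(2) \<open>x \<in> A\<close> \<open>y \<in> A\<close> unfolding closed_subset_def by auto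
  moreover have "a + b = s (x + y)"
    by (simp add: ab linear_add[OF \<open>linear s\<close>])
  ultimately show "a + b \<in> s ` A" by blast
qed

lemma closed_hull_image_involution:
  assumes "root_involution R s" "A \<subseteq> R" "s ` A = A"
  shows "s ` closed_hull R A = closed_hull R A"
proof -
  let ?H = "closed_hull R A"
  have "\<And>x. s (s x) = x" using assms(1) unfolding root_involution_def by auto
  then have ss: "s ` s ` X = X" for X by (simp add: image_image)
  have "closed_subset R (s ` ?H)"
    using closed_subset_image_involution[OF assms(1) closed_subset_closed_hull[OF assms(2)]] .
  moreover have "A \<subseteq> s ` ?H"
    using image_mono[OF hull_subset[of A "closed_subset R"], of s] assms(3)
    by (simp add: closed_hull_eq_hull)
  ultimately have "?H \<subseteq> s ` ?H"
    unfolding closed_hull_eq_hull by (rule hull_minimal[rotated])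
  then have "s ` ?H \<subseteq> s ` s ` ?H" by (rule image_mono)
  then have "s ` ?H \<subseteq> ?H" by (simp only: ss)
  with \<open>?H \<subseteq> s ` ?H\<close> show ?thesis by blast
qed

lemma Q_of_subset_roots: "Q_of R C \<Psi> \<subseteq> R"
  unfolding Q_of_def pos_roots_def neg_roots_def by blast

lemma pos_roots_subset_Q_of: "pos_roots R C \<subseteq> Q_of R C \<Psi>"
  unfolding Q_of_def by blast

lemma Q_of_antimono: "\<Psi> \<subseteq> \<Psi>' \<Longrightarrow> Q_of R C \<Psi>' \<subseteq> Q_of R C \<Psi>"
  unfolding Q_of_def by blast

locale root_chamber =
  fixes R :: "'a::euclidean_space set" and C :: "'a set" and x0 :: 'a
  assumes reduced: "reduced_root_system R"
    and regular: "\<And>\<alpha>. \<alpha> \<in> R \<Longrightarrow> \<alpha> \<bullet> x0 \<noteq> 0"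
    and pos_roots_eq: "pos_roots R C = {\<alpha>\<in>R. 0 < \<alpha> \<bullet> x0}"
    and neg_roots_eq: "neg_roots R C = {\<alpha>\<in>R. \<alpha> \<bullet> x0 < 0}"
begin

abbreviation "P \<equiv> pos_roots R C"
abbreviation "N \<equiv> neg_roots R C"
abbreviation "B \<equiv> simple_roots R C"
abbreviation "coord \<alpha> \<equiv> representation B \<alpha>"

lemma finite_roots: "finite R"
  using reduced unfolding reduced_root_system_def by blast

lemma uminus_root: "\<alpha> \<in> R \<Longrightarrow> - \<alpha> \<in> R"
  using reduced by (rule root_system_uminus)

lemma pos_roots_subset: "P \<subseteq> R"
  and neg_roots_subset: "N \<subseteq> R"
  and simple_roots_subset: "B \<subseteq> P"
  unfolding pos_roots_def neg_roots_def simple_roots_def by blast+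

lemma finite_simple_roots: "finite B"
  using simple_roots_subset pos_roots_subset by (blast intro: finite_subset[OF _ finite_roots])

lemma root_pos_or_neg: "\<alpha> \<in> R \<Longrightarrow> \<alpha> \<in> P \<or> \<alpha> \<in> N"
  using regular[of \<alpha>] by (auto simp: pos_roots_eq neg_roots_eq)

lemma uminus_pos_root: "\<alpha> \<in> P \<Longrightarrow> - \<alpha> \<in> N"
  and uminus_neg_root: "\<alpha> \<in> N \<Longrightarrow> - \<alpha> \<in> P"
  using uminus_root by (auto simp: pos_roots_eq neg_roots_eq)

lemma simple_root_inner_pos: "\<gamma> \<in> B \<Longrightarrow> 0 < \<gamma> \<bullet> x0"
  using simple_roots_subset by (auto simp: pos_roots_eq)

lemma simple_root_not_sum: "\<gamma> \<in> B \<Longrightarrow> \<beta> \<in> P \<Longrightarrow> \<delta> \<in> P \<Longrightarrow> \<gamma> \<noteq> \<beta> + \<delta>"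
  by (auto simp: simple_roots_def)

lemma root_induct [consumes 1, case_names less]:
  assumes "\<alpha> \<in> R"
    and step: "\<And>\<alpha>. \<alpha> \<in> R \<Longrightarrow> (\<And>\<beta>. \<beta> \<in> R \<Longrightarrow> \<beta> \<bullet> x0 < \<alpha> \<bullet> x0 \<Longrightarrow> Pr \<beta>) \<Longrightarrow> Pr \<alpha>"
  shows "Pr \<alpha>"
  using assms(1)
proof (induction "card {\<beta>\<in>R. \<beta> \<bullet> x0 < \<alpha> \<bullet> x0}" arbitrary: \<alpha> rule: less_induct)
  case less
  show ?case
  proof (rule step[OF less.prems])
    fix \<beta> assume \<beta>: "\<beta> \<in> R" "\<beta> \<bullet> x0 < \<alpha> \<bullet> x0"
    then have "{\<gamma>\<in>R. \<gamma> \<bullet> x0 < \<beta> \<bullet> x0} \<subset> {\<gamma>\<in>R. \<gamma> \<bullet> x0 < \<alpha> \<bullet> x0}"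
      by auto
    then have "card {\<gamma>\<in>R. \<gamma> \<bullet> x0 < \<beta> \<bullet> x0} < card {\<gamma>\<in>R. \<gamma> \<bullet> x0 < \<alpha> \<bullet> x0}"
      using finite_roots by (intro psubset_card_mono) auto
    then show "Pr \<beta>"
      using less.hyps \<beta> by blast
  qed
qed

lemma simple_roots_inner_nonpos:
  assumes "\<gamma> \<in> B" "\<delta> \<in> B" "\<gamma> \<noteq> \<delta>"
  shows "\<gamma> \<bullet> \<delta> \<le> 0"
proof (rule ccontr)
  assume "\<not> \<gamma> \<bullet> \<delta> \<le> 0"
  then have "\<gamma> - \<delta> \<in> R"
    using assms reduced root_system_diff simple_roots_subset pos_roots_subset by (meson not_le subsetD)
  then consider "\<gamma> - \<delta> \<in> P" | "\<delta> - \<gamma> \<in> P"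
    using root_pos_or_neg uminus_neg_root by fastforce
  then show False
    using assms simple_root_not_sum simple_roots_subset
    by cases (metis diff_add_cancel subsetD)+
qed

lemma independent_simple_roots: "independent B"
  using finite_simple_roots simple_roots_inner_nonpos simple_root_inner_pos
  by (rule independent_if_pairwise_nonacute)

lemma pos_root_in_span_coord_nonneg: "\<alpha> \<in> P \<Longrightarrow> \<alpha> \<in> span B \<and> (\<forall>\<gamma>. 0 \<le> coord \<alpha> \<gamma>)"
proof -
  assume "\<alpha> \<in> P"
  then have "\<alpha> \<in> R" using pos_roots_subset by blast
  then show ?thesis using \<open>\<alpha> \<in> P\<close>
  proof (induction rule: root_induct)
    case (less \<alpha>)
    show ?case
    proof (cases "\<alpha> \<in> B")
      case True
      then show ?thesis
        by (simp add: span_base representation_basis[OF independent_simple_roots])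
    next
      case False
      then obtain \<beta> \<delta> where "\<beta> \<in> P" "\<delta> \<in> P" and \<alpha>: "\<alpha> = \<beta> + \<delta>"
        using less.prems unfolding simple_roots_def by blast
      then have "\<beta> \<bullet> x0 < \<alpha> \<bullet> x0" "\<delta> \<bullet> x0 < \<alpha> \<bullet> x0"
        by (auto simp: pos_roots_eq inner_add_left)
      then have "\<beta> \<in> span B \<and> (\<forall>\<gamma>. 0 \<le> coord \<beta> \<gamma>)" "\<delta> \<in> span B \<and> (\<forall>\<gamma>. 0 \<le> coord \<delta> \<gamma>)"
        using less.IH \<open>\<beta> \<in> P\<close> \<open>\<delta> \<in> P\<close> subsetD[OF pos_roots_subset] by blast+
      then show ?thesis
        unfolding \<alpha> by (simp add: span_add representation_add[OF independent_simple_roots])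
    qed
  qed
qed

lemma root_in_span: "\<alpha> \<in> R \<Longrightarrow> \<alpha> \<in> span B"
proof (drule root_pos_or_neg, elim disjE)
  show "\<alpha> \<in> P \<Longrightarrow> \<alpha> \<in> span B"
    using pos_root_in_span_coord_nonneg by blast
  assume "\<alpha> \<in> N"
  then have "- \<alpha> \<in> span B"
    using pos_root_in_span_coord_nonneg uminus_neg_root by blast
  from span_neg[OF this] show "\<alpha> \<in> span B" by simp
qed

lemma coord_add: "\<alpha> \<in> R \<Longrightarrow> \<beta> \<in> R \<Longrightarrow> coord (\<alpha> + \<beta>) \<gamma> = coord \<alpha> \<gamma> + coord \<beta> \<gamma>"
  by (simp add: representation_add[OF independent_simple_roots] root_in_span)

lemma coord_uminus: "\<alpha> \<in> R \<Longrightarrow> coord (- \<alpha>) \<gamma> = - coord \<alpha> \<gamma>"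
  by (simp add: representation_neg[OF independent_simple_roots] root_in_span)

lemma coord_simple: "\<gamma> \<in> B \<Longrightarrow> coord \<gamma> \<delta> = (if \<delta> = \<gamma> then 1 else 0)"
  by (simp add: representation_basis[OF independent_simple_roots])

lemma coord_pos_root_nonneg: "\<alpha> \<in> P \<Longrightarrow> 0 \<le> coord \<alpha> \<gamma>"
  using pos_root_in_span_coord_nonneg by blast

lemma coord_neg_root_nonpos: "\<alpha> \<in> N \<Longrightarrow> coord \<alpha> \<gamma> \<le> 0"
  using coord_pos_root_nonneg[OF uminus_neg_root] coord_uminus[OF subsetD[OF neg_roots_subset]]
  by fastforce

lemma sum_coord_eq: "\<alpha> \<in> span B \<Longrightarrow> (\<Sum>\<gamma>\<in>B. coord \<alpha> \<gamma> *\<^sub>R \<gamma>) = \<alpha>"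
  using independent_simple_roots finite_simple_roots by (intro sum_representation_eq) auto

lemma supp_eq_coord:
  assumes "\<alpha> \<in> span B"
  shows "supp R C \<alpha> = {\<gamma>\<in>B. coord \<alpha> \<gamma> \<noteq> 0}"
proof (intro equalityI subsetI)
  fix \<gamma> assume "\<gamma> \<in> supp R C \<alpha>"
  then obtain c where "\<gamma> \<in> B" "c \<gamma> \<noteq> 0" and c: "\<alpha> = (\<Sum>\<delta>\<in>B. c \<delta> *\<^sub>R \<delta>)"
    unfolding supp_def by blast
  have "(\<Sum>\<delta>\<in>B. (c \<delta> - coord \<alpha> \<delta>) *\<^sub>R \<delta>) = (\<Sum>\<delta>\<in>B. c \<delta> *\<^sub>R \<delta>) - (\<Sum>\<delta>\<in>B. coord \<alpha> \<delta> *\<^sub>R \<delta>)"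
    by (simp add: scaleR_diff_left sum_subtractf)
  also have "\<dots> = 0"
    unfolding sum_coord_eq[OF assms] c[symmetric] by simp
  finally have relation: "(\<Sum>\<delta>\<in>B. (c \<delta> - coord \<alpha> \<delta>) *\<^sub>R \<delta>) = 0" .
  have "c \<gamma> - coord \<alpha> \<gamma> = 0"
  proof (rule ccontr)
    assume "c \<gamma> - coord \<alpha> \<gamma> \<noteq> 0"
    then have "dependent B"
      unfolding dependent_finite[OF finite_simple_roots] using \<open>\<gamma> \<in> B\<close> relation
      by (intro exI[of _ "\<lambda>\<delta>. c \<delta> - coord \<alpha> \<delta>"]) auto
    with independent_simple_roots show False by contradiction
  qed
  then show "\<gamma> \<in> {\<gamma>\<in>B. coord \<alpha> \<gamma> \<noteq> 0}"
    using \<open>\<gamma> \<in> B\<close> \<open>c \<gamma> \<noteq> 0\<close> by simp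
next
  fix \<gamma> assume "\<gamma> \<in> {\<gamma>\<in>B. coord \<alpha> \<gamma> \<noteq> 0}"
  then show "\<gamma> \<in> supp R C \<alpha>"
    using sum_coord_eq[OF assms] unfolding supp_def by (auto intro!: exI[of _ "coord \<alpha>"])
qed

lemma supp_uminus: "\<alpha> \<in> R \<Longrightarrow> supp R C (- \<alpha>) = supp R C \<alpha>"
  by (simp add: supp_eq_coord root_in_span span_neg coord_uminus)

lemma supp_simple: "\<gamma> \<in> B \<Longrightarrow> supp R C \<gamma> = {\<gamma>}"
  by (auto simp: supp_eq_coord span_base coord_simple)

lemma supp_add_pos_roots:
  assumes "\<beta> \<in> P" "\<delta> \<in> P"
  shows "supp R C (\<beta> + \<delta>) = supp R C \<beta> \<union> supp R C \<delta>"
proof -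
  have "\<beta> \<in> R" "\<delta> \<in> R" using assms pos_roots_subset by auto
  moreover have "coord \<beta> \<gamma> + coord \<delta> \<gamma> \<noteq> 0 \<longleftrightarrow> coord \<beta> \<gamma> \<noteq> 0 \<or> coord \<delta> \<gamma> \<noteq> 0" for \<gamma>
    using coord_pos_root_nonneg[OF assms(1), of \<gamma>] coord_pos_root_nonneg[OF assms(2), of \<gamma>] by linarith
  ultimately show ?thesis
    by (auto simp: supp_eq_coord root_in_span span_add coord_add)
qed

end

lemma weyl_chamber_regular_point:
  assumes "reduced_root_system R" "weyl_chamber R C"
  obtains x0 where "root_chamber R C x0"
proof -
  obtain x0 where x0: "x0 \<notin> root_hyperplanes R"
    and C: "C = connected_component_set (- root_hyperplanes R) x0"
    using assms(2) unfolding weyl_chamber_def by blast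
  have "x0 \<in> C" "connected C" using x0 C by simp_all
  have nonzero: "\<alpha> \<bullet> y \<noteq> 0" if "\<alpha> \<in> R" "y \<in> C" for \<alpha> y
    using that connected_component_subset[of "- root_hyperplanes R" x0] C
    unfolding root_hyperplanes_def by blast
  have same_sign: "0 < \<alpha> \<bullet> y \<longleftrightarrow> 0 < \<alpha> \<bullet> x0" if "\<alpha> \<in> R" "y \<in> C" for \<alpha> y
  proof (rule ccontr)
    assume "\<not> (0 < \<alpha> \<bullet> y \<longleftrightarrow> 0 < \<alpha> \<bullet> x0)"
    then have "\<alpha> \<bullet> y \<le> 0 \<and> 0 \<le> \<alpha> \<bullet> x0 \<or> \<alpha> \<bullet> x0 \<le> 0 \<and> 0 \<le> \<alpha> \<bullet> y" by linarith
    then have "\<exists>z\<in>C. \<alpha> \<bullet> z = 0"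
      using connected_ivt_hyperplane[OF \<open>connected C\<close> \<open>y \<in> C\<close> \<open>x0 \<in> C\<close>]
        connected_ivt_hyperplane[OF \<open>connected C\<close> \<open>x0 \<in> C\<close> \<open>y \<in> C\<close>] by blast
    then show False using nonzero \<open>\<alpha> \<in> R\<close> by blast
  qed
  have "root_chamber R C x0"
  proof
    show "pos_roots R C = {\<alpha> \<in> R. 0 < \<alpha> \<bullet> x0}"
      unfolding pos_roots_def using same_sign \<open>x0 \<in> C\<close> by blast
    have "\<alpha> \<bullet> y < 0 \<longleftrightarrow> \<alpha> \<bullet> x0 < 0" if "\<alpha> \<in> R" "y \<in> C" for \<alpha> y
      using same_sign[OF that] nonzero[OF that] nonzero[OF that(1) \<open>x0 \<in> C\<close>] by linarith
    then show "neg_roots R C = {\<alpha> \<in> R. \<alpha> \<bullet> x0 < 0}"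
      unfolding neg_roots_def using \<open>x0 \<in> C\<close> by blast
  qed (use assms(1) nonzero \<open>x0 \<in> C\<close> in auto)
  then show thesis by (rule that)
qed

text \<open>The set \<Psi>_C of the paper, with \<Phi>_C^\<or> \<union> \<Phi>_C^{s,-} written as the simple roots \<beta>
  such that \<beta> \<notin> nilpart Q or s \<beta> is negative.\<close>

definition obstruction_roots :: "'a::euclidean_space set \<Rightarrow> 'a set \<Rightarrow> 'a set \<Rightarrow> ('a \<Rightarrow> 'a) \<Rightarrow> 'a set" where
  "obstruction_roots R C Q s =
     {\<alpha> \<in> simple_roots R C \<inter> nilpart Q. s \<alpha> \<in> pos_roots R C \<inter> nilpart Q \<and>
        (\<forall>\<beta> \<in> simple_roots R C. \<beta> \<notin> nilpart Q \<or> s \<beta> \<in> neg_roots R C \<longrightarrow> \<alpha> \<notin> supp R C (s \<beta>))}"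

context root_chamber
begin

lemma neg_sum_mem_closed_iff:
  assumes "closed_subset R Q'" "P \<subseteq> Q'" "\<beta> \<in> P" "\<delta> \<in> P" "\<beta> + \<delta> \<in> R"
  shows "- (\<beta> + \<delta>) \<in> Q' \<longleftrightarrow> - \<beta> \<in> Q' \<and> - \<delta> \<in> Q'"
proof -
  have closed: "\<And>x y. x \<in> Q' \<Longrightarrow> y \<in> Q' \<Longrightarrow> x + y \<in> R \<Longrightarrow> x + y \<in> Q'"
    using assms(1) unfolding closed_subset_def by blast
  have "\<beta> \<in> Q'" "\<delta> \<in> Q'" using assms(2-4) by blast+
  moreover have "- \<beta> \<in> R" "- \<delta> \<in> R" "- (\<beta> + \<delta>) \<in> R"
    using assms(3-5) pos_roots_subset uminus_root by blast+
  ultimately show ?thesis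
    using closed[of "- (\<beta> + \<delta>)" \<beta>] closed[of "- (\<beta> + \<delta>)" \<delta>] closed[of "- \<beta>" "- \<delta>"]
    by (auto simp: algebra_simps)
qed

lemma neg_mem_closed_iff_supp:
  assumes "closed_subset R Q'" "P \<subseteq> Q'" "\<delta> \<in> P"
  shows "- \<delta> \<in> Q' \<longleftrightarrow> (\<forall>\<gamma>\<in>supp R C \<delta>. - \<gamma> \<in> Q')"
proof -
  have "\<delta> \<in> R" using assms(3) pos_roots_subset by blast
  then show ?thesis using assms(3)
  proof (induction rule: root_induct)
    case (less \<delta>)
    show ?case
    proof (cases "\<delta> \<in> B")
      case True
      then show ?thesis by (simp add: supp_simple)
    next
      case False
      then obtain \<beta> \<epsilon> where "\<beta> \<in> P" "\<epsilon> \<in> P" and \<delta>: "\<delta> = \<beta> + \<epsilon>"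
        using less.prems unfolding simple_roots_def by blast
      then have "\<beta> \<bullet> x0 < \<delta> \<bullet> x0" "\<epsilon> \<bullet> x0 < \<delta> \<bullet> x0"
        by (auto simp: pos_roots_eq inner_add_left)
      then have "- \<beta> \<in> Q' \<longleftrightarrow> (\<forall>\<gamma>\<in>supp R C \<beta>. - \<gamma> \<in> Q')" "- \<epsilon> \<in> Q' \<longleftrightarrow> (\<forall>\<gamma>\<in>supp R C \<epsilon>. - \<gamma> \<in> Q')"
        using less.IH \<open>\<beta> \<in> P\<close> \<open>\<epsilon> \<in> P\<close> subsetD[OF pos_roots_subset] by blast+
      then show ?thesis
        using neg_sum_mem_closed_iff[OF assms(1,2) \<open>\<beta> \<in> P\<close> \<open>\<epsilon> \<in> P\<close>] less.hyps
        unfolding \<delta> supp_add_pos_roots[OF \<open>\<beta> \<in> P\<close> \<open>\<epsilon> \<in> P\<close>] by blast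
    qed
  qed
qed

lemma neg_simple_mem_closed_of_neg_root:
  assumes "closed_subset R Q'" "P \<subseteq> Q'" "\<epsilon> \<in> N" "\<epsilon> \<in> Q'" "\<gamma> \<in> supp R C \<epsilon>"
  shows "- \<gamma> \<in> Q'"
proof -
  have "\<epsilon> \<in> R" using assms(3) neg_roots_subset by blast
  have "- (- \<epsilon>) \<in> Q'" "\<gamma> \<in> supp R C (- \<epsilon>)"
    using assms(4,5) supp_uminus[OF \<open>\<epsilon> \<in> R\<close>] by simp_all
  then show ?thesis
    using neg_mem_closed_iff_supp[OF assms(1,2) uminus_neg_root[OF assms(3)]] by blast
qed

lemma Q_of_mem_iff:
  assumes "\<Psi> \<subseteq> B" "\<alpha> \<in> R"
  shows "\<alpha> \<in> Q_of R C \<Psi> \<longleftrightarrow> (\<forall>\<psi>\<in>\<Psi>. 0 \<le> coord \<alpha> \<psi>)"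
proof (cases "\<alpha> \<in> P")
  case True
  then show ?thesis
    using pos_roots_subset_Q_of coord_pos_root_nonneg by blast
next
  case False
  then have "\<alpha> \<in> N" using root_pos_or_neg assms(2) by blast
  have "\<alpha> \<in> Q_of R C \<Psi> \<longleftrightarrow> (\<forall>\<psi>\<in>\<Psi>. coord \<alpha> \<psi> = 0)"
    using False \<open>\<alpha> \<in> N\<close> assms supp_eq_coord[OF root_in_span] unfolding Q_of_def by auto
  also have "\<dots> \<longleftrightarrow> (\<forall>\<psi>\<in>\<Psi>. 0 \<le> coord \<alpha> \<psi>)"
    using coord_neg_root_nonpos[OF \<open>\<alpha> \<in> N\<close>] by (auto intro: order.antisym)
  finally show ?thesis .
qed

lemma closed_subset_Q_of:
  assumes "\<Psi> \<subseteq> B"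
  shows "closed_subset R (Q_of R C \<Psi>)"
  unfolding closed_subset_def
proof (intro conjI Q_of_subset_roots ballI impI)
  fix \<alpha> \<beta> assume "\<alpha> \<in> Q_of R C \<Psi>" "\<beta> \<in> Q_of R C \<Psi>" "\<alpha> + \<beta> \<in> R"
  moreover have "\<alpha> \<in> R" "\<beta> \<in> R"
    using calculation Q_of_subset_roots by blast+
  ultimately show "\<alpha> + \<beta> \<in> Q_of R C \<Psi>"
    by (simp add: Q_of_mem_iff[OF assms] coord_add add_nonneg_nonneg)
qed

lemma parabolic_Q_of:
  assumes "\<Psi> \<subseteq> B"
  shows "parabolic R (Q_of R C \<Psi>)"
proof -
  have "\<alpha> \<in> Q_of R C \<Psi> \<union> uminus ` Q_of R C \<Psi>" if "\<alpha> \<in> R" for \<alpha>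
  proof (cases "\<alpha> \<in> P")
    case False
    then have "- \<alpha> \<in> Q_of R C \<Psi>"
      using that root_pos_or_neg uminus_neg_root pos_roots_subset_Q_of by blast
    then have "- (- \<alpha>) \<in> uminus ` Q_of R C \<Psi>" by (rule imageI)
    then show ?thesis by simp
  qed (use pos_roots_subset_Q_of in blast)
  moreover have "uminus ` Q_of R C \<Psi> \<subseteq> R"
    using Q_of_subset_roots uminus_root by blast
  ultimately show ?thesis
    unfolding parabolic_def using closed_subset_Q_of[OF assms] Q_of_subset_roots by blast
qed

lemma Q_of_eq_roots_iff:
  assumes "\<Psi> \<subseteq> B"
  shows "Q_of R C \<Psi> = R \<longleftrightarrow> \<Psi> = {}"
proof
  assume "\<Psi> = {}"
  then show "Q_of R C \<Psi> = R"
    using Q_of_mem_iff[OF assms] Q_of_subset_roots by blast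
next
  assume all: "Q_of R C \<Psi> = R"
  show "\<Psi> = {}"
  proof (rule ccontr)
    assume "\<Psi> \<noteq> {}"
    then obtain \<psi> where "\<psi> \<in> \<Psi>" by blast
    then have "\<psi> \<in> B" "\<psi> \<in> R" using assms simple_roots_subset pos_roots_subset by blast+
    then have "coord (- \<psi>) \<psi> = -1"
      by (simp add: coord_uminus coord_simple)
    then have "- \<psi> \<notin> Q_of R C \<Psi>"
      using Q_of_mem_iff[OF assms uminus_root[OF \<open>\<psi> \<in> R\<close>]] \<open>\<psi> \<in> \<Psi>\<close> by force
    with all uminus_root[OF \<open>\<psi> \<in> R\<close>] show False by blast
  qed
qed

lemma closed_subset_coord_nonneg:
  assumes "closed_subset R Q" "P \<subseteq> Q" "\<alpha> \<in> Q" "\<gamma> \<in> B" "\<gamma> \<in> nilpart Q"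
  shows "0 \<le> coord \<alpha> \<gamma>"
proof (rule ccontr)
  assume "\<not> 0 \<le> coord \<alpha> \<gamma>"
  then have "\<alpha> \<notin> P" using coord_pos_root_nonneg by force
  moreover have "\<alpha> \<in> R" using assms(1,3) unfolding closed_subset_def by blast
  ultimately have "\<alpha> \<in> N" using root_pos_or_neg by blast
  moreover have "\<gamma> \<in> supp R C \<alpha>"
    using \<open>\<not> 0 \<le> coord \<alpha> \<gamma>\<close> assms(4) supp_eq_coord[OF root_in_span[OF \<open>\<alpha> \<in> R\<close>]] by auto
  ultimately have "- \<gamma> \<in> Q"
    using neg_simple_mem_closed_of_neg_root[OF assms(1,2)] assms(3) by blast
  with assms(5) show False unfolding nilpart_def by blast
qed

lemma closed_subset_Q_of_nilpart:
  assumes "closed_subset R Q" "P \<subseteq> Q"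
  shows "Q \<subseteq> Q_of R C (B \<inter> nilpart Q)"
proof
  fix \<alpha> assume "\<alpha> \<in> Q"
  moreover have "\<alpha> \<in> R" using assms(1) \<open>\<alpha> \<in> Q\<close> unfolding closed_subset_def by blast
  ultimately show "\<alpha> \<in> Q_of R C (B \<inter> nilpart Q)"
    using closed_subset_coord_nonneg[OF assms] by (simp add: Q_of_mem_iff)
qed

lemma Q_of_subset_closed:
  assumes "closed_subset R Q'" "P \<subseteq> Q'" "\<And>\<gamma>. \<gamma> \<in> B \<Longrightarrow> \<gamma> \<notin> \<Psi> \<Longrightarrow> - \<gamma> \<in> Q'"
  shows "Q_of R C \<Psi> \<subseteq> Q'"
proof
  fix \<alpha> assume "\<alpha> \<in> Q_of R C \<Psi>"
  show "\<alpha> \<in> Q'"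
  proof (cases "\<alpha> \<in> P")
    case False
    with \<open>\<alpha> \<in> Q_of R C \<Psi>\<close> have "\<alpha> \<in> N" and disjoint: "supp R C \<alpha> \<inter> \<Psi> = {}"
      unfolding Q_of_def by auto
    have "\<alpha> \<in> R" using \<open>\<alpha> \<in> N\<close> neg_roots_subset by blast
    have "\<forall>\<gamma>\<in>supp R C (- \<alpha>). - \<gamma> \<in> Q'"
      using assms(3) disjoint supp_uminus[OF \<open>\<alpha> \<in> R\<close>] supp_eq_coord[OF root_in_span[OF \<open>\<alpha> \<in> R\<close>]]
      by blast
    then have "- (- \<alpha>) \<in> Q'"
      using neg_mem_closed_iff_supp[OF assms(1,2) uminus_neg_root[OF \<open>\<alpha> \<in> N\<close>]] by blast
    then show ?thesis by simp
  qed (use assms(2) in blast)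
qed

lemma coord_linear_image:
  assumes "linear s" "\<And>\<gamma>. \<gamma> \<in> B \<Longrightarrow> s \<gamma> \<in> R" "\<alpha> \<in> R"
  shows "coord (s \<alpha>) \<psi> = (\<Sum>\<gamma>\<in>B. coord \<alpha> \<gamma> * coord (s \<gamma>) \<psi>)"
proof -
  have "s \<alpha> = s (\<Sum>\<gamma>\<in>B. coord \<alpha> \<gamma> *\<^sub>R \<gamma>)"
    by (simp only: sum_coord_eq[OF root_in_span[OF assms(3)]])
  also have "\<dots> = (\<Sum>\<gamma>\<in>B. coord \<alpha> \<gamma> *\<^sub>R s \<gamma>)"
    by (simp only: linear_sum[OF assms(1)] linear_scale[OF assms(1)])
  finally have "coord (s \<alpha>) \<psi> = (\<Sum>\<gamma>\<in>B. representation B (coord \<alpha> \<gamma> *\<^sub>R s \<gamma>) \<psi>)"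
    using assms(2) by (simp add: representation_sum independent_simple_roots span_scale root_in_span)
  also have "\<dots> = (\<Sum>\<gamma>\<in>B. coord \<alpha> \<gamma> * coord (s \<gamma>) \<psi>)"
    using assms(2) by (simp add: representation_scale independent_simple_roots root_in_span)
  finally show ?thesis .
qed

lemma obstruction_coord_image_nonneg:
  assumes "closed_subset R Q" "P \<subseteq> Q" "root_involution R s"
    and "\<alpha> \<in> Q" "\<psi> \<in> obstruction_roots R C Q s"
  shows "0 \<le> coord (s \<alpha>) \<psi>"
proof -
  have "linear s" "s ` R = R" using assms(3) unfolding root_involution_def by auto
  have "\<psi> \<in> B" using assms(5) unfolding obstruction_roots_def by blast
  have "\<alpha> \<in> R" using assms(1,4) unfolding closed_subset_def by blast
  have sB: "s \<gamma> \<in> R" if "\<gamma> \<in> B" for \<gamma>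
    using that simple_roots_subset pos_roots_subset \<open>s ` R = R\<close> by blast
  have "0 \<le> coord \<alpha> \<gamma> * coord (s \<gamma>) \<psi>" if "\<gamma> \<in> B" for \<gamma>
  proof (cases "\<gamma> \<in> nilpart Q \<and> s \<gamma> \<in> P")
    case True
    then show ?thesis
      using closed_subset_coord_nonneg[OF assms(1,2,4) \<open>\<gamma> \<in> B\<close>] coord_pos_root_nonneg by simp
  next
    case False
    with root_pos_or_neg[OF sB[OF \<open>\<gamma> \<in> B\<close>]] have "\<gamma> \<notin> nilpart Q \<or> s \<gamma> \<in> N" by blast
    then have "\<psi> \<notin> supp R C (s \<gamma>)"
      using assms(5) \<open>\<gamma> \<in> B\<close> unfolding obstruction_roots_def by blast
    then have "coord (s \<gamma>) \<psi> = 0"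
      using \<open>\<psi> \<in> B\<close> supp_eq_coord[OF root_in_span[OF sB[OF \<open>\<gamma> \<in> B\<close>]]] by blast
    then show ?thesis by simp
  qed
  then show ?thesis
    by (subst coord_linear_image[OF \<open>linear s\<close> sB \<open>\<alpha> \<in> R\<close>]) (auto intro!: sum_nonneg)
qed

lemma Un_image_subset_Q_of_obstruction:
  assumes "closed_subset R Q" "P \<subseteq> Q" "root_involution R s"
  shows "Q \<union> s ` Q \<subseteq> Q_of R C (obstruction_roots R C Q s)"
proof -
  let ?\<Psi> = "obstruction_roots R C Q s"
  have \<Psi>: "?\<Psi> \<subseteq> B \<inter> nilpart Q" unfolding obstruction_roots_def by blast
  have "Q \<subseteq> Q_of R C ?\<Psi>"
    using closed_subset_Q_of_nilpart[OF assms(1,2)] Q_of_antimono[OF \<Psi>] by blast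
  moreover have "s \<alpha> \<in> Q_of R C ?\<Psi>" if "\<alpha> \<in> Q" for \<alpha>
  proof -
    have "\<alpha> \<in> R" using that assms(1) unfolding closed_subset_def by blast
    then have "s \<alpha> \<in> R" using assms(3) unfolding root_involution_def by blast
    with \<Psi> show ?thesis
      using obstruction_coord_image_nonneg[OF assms that] by (simp add: Q_of_mem_iff)
  qed
  ultimately show ?thesis by blast
qed

lemma neg_simple_mem_of_supp_image:
  assumes "P \<subseteq> Q" "root_involution R s" "closed_subset R Q'" "Q \<union> s ` Q \<subseteq> Q'"
    and "\<beta> \<in> B" "\<beta> \<notin> nilpart Q \<or> s \<beta> \<in> N" "\<gamma> \<in> supp R C (s \<beta>)"
  shows "- \<gamma> \<in> Q'"
proof -
  have "linear s" "s ` R = R" using assms(2) unfolding root_involution_def by auto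
  have "P \<subseteq> Q'" using assms(1,4) by blast
  have "\<beta> \<in> Q" "s \<beta> \<in> R"
    using assms(1,5) simple_roots_subset pos_roots_subset \<open>s ` R = R\<close> by blast+
  then have "s \<beta> \<in> Q'" using assms(4) by blast
  \<comment> \<open>Some negative root of Q' has \<gamma> in its support: s \<beta> itself, or else -s \<beta>, which lies in
    s(Q) because -\<beta> \<in> Q.\<close>
  show ?thesis
  proof (cases "s \<beta> \<in> N")
    case True
    then show ?thesis
      using neg_simple_mem_closed_of_neg_root[OF assms(3) \<open>P \<subseteq> Q'\<close>] \<open>s \<beta> \<in> Q'\<close> assms(7) by blast
  next
    case False
    with assms(6) have "- \<beta> \<in> Q" using \<open>\<beta> \<in> Q\<close> unfolding nilpart_def by blast
    then have "s (- \<beta>) \<in> Q'" using assms(4) by blast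
    then have "- s \<beta> \<in> Q'" by (simp add: linear_neg[OF \<open>linear s\<close>])
    moreover have "- s \<beta> \<in> N"
      using False root_pos_or_neg[OF \<open>s \<beta> \<in> R\<close>] uminus_pos_root by blast
    moreover have "\<gamma> \<in> supp R C (- s \<beta>)"
      using assms(7) supp_uminus[OF \<open>s \<beta> \<in> R\<close>] by simp
    ultimately show ?thesis
      using neg_simple_mem_closed_of_neg_root[OF assms(3) \<open>P \<subseteq> Q'\<close>] by blast
  qed
qed

lemma neg_simple_mem_of_not_obstruction:
  assumes "P \<subseteq> Q" "root_involution R s" "closed_subset R Q'" "Q \<union> s ` Q \<subseteq> Q'"
    and "\<gamma> \<in> B" "\<gamma> \<notin> obstruction_roots R C Q s"
  shows "- \<gamma> \<in> Q'"
proof -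
  have "linear s" "\<And>x. s (s x) = x" "s ` R = R"
    using assms(2) unfolding root_involution_def by auto
  have via_s: "- \<gamma> \<in> Q'" if "- s \<gamma> \<in> Q"
  proof -
    have "s (- s \<gamma>) \<in> Q'" using that assms(4) by blast
    then show ?thesis by (simp add: linear_neg[OF \<open>linear s\<close>] \<open>\<And>x. s (s x) = x\<close>)
  qed
  have "\<gamma> \<in> Q" "s \<gamma> \<in> R"
    using assms(1,5) simple_roots_subset pos_roots_subset \<open>s ` R = R\<close> by blast+
  consider "\<gamma> \<notin> nilpart Q" | "s \<gamma> \<in> N" | "s \<gamma> \<in> P" "s \<gamma> \<notin> nilpart Q"
    | \<beta> where "\<beta> \<in> B" "\<beta> \<notin> nilpart Q \<or> s \<beta> \<in> N" "\<gamma> \<in> supp R C (s \<beta>)"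
    using assms(5,6) root_pos_or_neg[OF \<open>s \<gamma> \<in> R\<close>] unfolding obstruction_roots_def by blast
  then show ?thesis
  proof cases
    case 1
    then show ?thesis using \<open>\<gamma> \<in> Q\<close> assms(4) unfolding nilpart_def by blast
  next
    case 2
    then show ?thesis using via_s uminus_neg_root assms(1) by blast
  next
    case 3
    then show ?thesis using via_s assms(1) unfolding nilpart_def by blast
  next
    case 4
    then show ?thesis using neg_simple_mem_of_supp_image[OF assms(1-4)] by blast
  qed
qed

lemma Q_of_obstruction_least:
  assumes "P \<subseteq> Q" "root_involution R s" "closed_subset R Q'" "Q \<union> s ` Q \<subseteq> Q'"
  shows "Q_of R C (obstruction_roots R C Q s) \<subseteq> Q'"
  using assms neg_simple_mem_of_not_obstruction by (intro Q_of_subset_closed) blast+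

end

theorem theorem2p31:
  fixes R :: "'a::euclidean_space set" and Q C :: "'a set" and s :: "'a \<Rightarrow> 'a"
  assumes "reduced_root_system R"
    and "parabolic R Q"
    and "weyl_chamber R C"
    and "pos_roots R C \<subseteq> Q"
    and "root_involution R s"
  defines "\<Phi> \<equiv> simple_roots R C \<inter> nilpart Q"
  defines "\<Phi>v \<equiv> simple_roots R C - \<Phi>"
  defines "\<Phi>p \<equiv> {\<alpha>\<in>\<Phi>. s \<alpha> \<in> pos_roots R C}"
  defines "\<Phi>m \<equiv> {\<alpha>\<in>\<Phi>. s \<alpha> \<in> neg_roots R C}"
  defines "\<Psi> \<equiv> {\<alpha>\<in>\<Phi>p. s \<alpha> \<in> nilpart Q \<and> \<alpha> \<notin> (\<Union>\<beta>\<in>\<Phi>v \<union> \<Phi>m. supp R C (s \<beta>))}"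
  shows "parabolic R (Q_of R C \<Psi>)
         \<and> Q \<union> s ` Q \<subseteq> Q_of R C \<Psi>
         \<and> (\<forall>Q'. closed_subset R Q' \<and> Q \<union> s ` Q \<subseteq> Q' \<longrightarrow> Q_of R C \<Psi> \<subseteq> Q')
         \<and> closed_hull R (Q \<union> s ` Q) = Q_of R C \<Psi>
         \<and> totally_real (Q_of R C \<Psi>) s
         \<and> (fundamental R Q s \<longleftrightarrow> \<Psi> = {})"
proof -
  obtain x0 where "root_chamber R C x0"
    using weyl_chamber_regular_point assms(1,3) by blast
  interpret root_chamber R C x0 by fact
  have \<Psi>: "\<Psi> = obstruction_roots R C Q s"
    unfolding \<Psi>_def \<Phi>p_def \<Phi>m_def \<Phi>v_def \<Phi>_def obstruction_roots_def by blast
  have "\<Psi> \<subseteq> B" unfolding \<Psi>_def \<Phi>p_def \<Phi>_def by blast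
  have "closed_subset R Q" using assms(2) unfolding parabolic_def by blast
  have contains: "Q \<union> s ` Q \<subseteq> Q_of R C \<Psi>"
    unfolding \<Psi> using Un_image_subset_Q_of_obstruction[OF \<open>closed_subset R Q\<close> assms(4,5)] .
  have least: "\<forall>Q'. closed_subset R Q' \<and> Q \<union> s ` Q \<subseteq> Q' \<longrightarrow> Q_of R C \<Psi> \<subseteq> Q'"
    unfolding \<Psi> using Q_of_obstruction_least[OF assms(4,5)] by blast
  have hull: "closed_hull R (Q \<union> s ` Q) = Q_of R C \<Psi>"
    unfolding closed_hull_eq_hull
    using contains closed_subset_Q_of[OF \<open>\<Psi> \<subseteq> B\<close>] least by (intro hull_unique) auto
  have "\<And>x. s (s x) = x" using assms(5) unfolding root_involution_def by blast
  then have "s ` (Q \<union> s ` Q) = Q \<union> s ` Q" by (simp add: image_Un image_image Un_commute)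
  moreover have "Q \<union> s ` Q \<subseteq> R"
    using contains Q_of_subset_roots by blast
  ultimately have "totally_real (Q_of R C \<Psi>) s"
    unfolding totally_real_def using closed_hull_image_involution[OF assms(5)] hull by metis
  then show ?thesis
    using parabolic_Q_of[OF \<open>\<Psi> \<subseteq> B\<close>] Q_of_eq_roots_iff[OF \<open>\<Psi> \<subseteq> B\<close>] contains least hull
    unfolding fundamental_def by simp
qed

end
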